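(* Let $G$ be the two-player game with $A_1=\{C_1,D_1\}$, $A_2=\{C_2,D_2\}$ and $\pi(C_1,C_2)=(2,2)$, $\pi(C_1,D_2)=(0,3)$, $\pi(D_1,C_2)=(3,0)$, $\pi(D_1,D_2)=(1,1)$. Then for every $p\in(0,1)$, the profile $(D_1,D_2)$ (the unique, and strict, Nash equilibrium of $G$) is not stable for the degree of observability $p$; that is, no stable configuration for degree $p$ has aggregate outcome equal to the point mass at $(D_1,D_2)$.
   Context: Preference types: $\Theta=\mathbb{R}^A$, $A=A_1\times A_2$ (extended bilinearly; $\pi_i$ likewise). $\mathcal{M}(\Theta^2)$: product distributions $\mu=\mu_1\times\mu_2$ with finitely supported marginals; $\mu(\theta)=\mu_1(\theta_1)\mu_2(\theta_2)$, $\mu_{-i}=\mu_j$ ($j\ne i$). Mutants: for nonempty $J\subseteq N=\{1,2\}$, $\tilde\theta_J\in\prod_{j\in J}(\Theta\setminus\operatorname{supp}\mu_j)$ with shares $\varepsilon\in(0,1)^{|J|}$, $\|\varepsilon\|=\max_j\varepsilon_j$; post-entry $\tilde\mu^\varepsilon_i=(1-\varepsilon_i)\mu_i+\varepsilon_i\delta_{\tilde\theta_i}$ for $i\in J$, $\mu_i$ otherwise. Partial observability with degree $p\in(0,1)$: each player independently observes opponents' types with probability $p$ and otherwise knows only $\mu_{-i}$. Strategies: $b:\operatorname{supp}\mu\to\prod_i\Delta(A_i)$ (play when observing) and $s_i:\operatorname{supp}\mu_i\to\Delta(A_i)$ (play when not observing), $s(\theta)=(s_i(\theta_i))_i$. For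 a matched profile $\theta$ and the set $T\subseteq N$ of non-observing players, the profile played is $(s(\theta)_T,b(\theta)_{-T})$. $(b,s)$ is an equilibrium if for all $\theta\in\operatorname{supp}\mu$ and $i$: $b_i(\theta)\in\arg\max_{\sigma_i}\sum_{T\subseteq N\setminus\{i\}}p^{n-1-|T|}(1-p)^{|T|}\theta_i(\sigma_i,(s_{-i}(\theta_{-i})_T,b_{-i}(\theta)_{-T}))$ and $s_i(\theta_i)\in\arg\max_{\sigma_i}\sum_{\theta'_{-i}}\mu_{-i}(\theta'_{-i})\sum_{T\subseteq N\setminus\{i\}}p^{n-1-|T|}(1-p)^{|T|}\theta_i(\sigma_i,(s_{-i}(\theta'_{-i})_T,b_{-i}(\theta_i,\theta'_{-i})_{-T}))$ (here $n=2$); $B_p(\mu)$ is the set of these; $(\mu,b,s)$ is a configuration. Aggregate outcome: $\varphi_{\mu,b,s}(a)=\sum_{\theta}\mu(\theta)\sum_{T\subseteq N}p^{n-|T|}(1-p)^{|T|}\prod_i(s(\theta)_T,b(\theta)_{-T})_i(a_i)$. Average fitness: $\Pi_{\theta_i}(\mu;b,s)=\sum_{\theta'_{-i}}\mu_{-i}(\theta'_{-i})\sum_{T\subseteq N}p^{n-|T|}(1-p)^{|T|}\pi_i(s(\theta_i,\theta'_{-i})_T,b(\theta_i,\theta'_{-i})_{-T})$. Balanced: equal average fitness of all types within each population. Nearby set: $B_p^\eta(\tilde\mu^\varepsilon;b,s)=\{(\tilde b,\tilde s)\in B_p(\tilde\mu^\varepsilon):\max_i\|\tilde b_i(\theta)-b_i(\theta)\|\le\eta,\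 \max_i\|\tilde s_i(\theta_i)-s_i(\theta_i)\|\le\eta\ \forall\theta\in\operatorname{supp}\mu\}$. $(\mu,b,s)$ is stable (for degree $p$) if balanced and for every nonempty $J$, every $\tilde\theta_J$, every $\eta>0$, there are $\bar\eta\in[0,\eta)$, $\bar\epsilon\in(0,1)$ such that for all $\varepsilon$ with $\|\varepsilon\|\in(0,\bar\epsilon)$, $B_p^{\bar\eta}(\tilde\mu^\varepsilon;b,s)\ne\emptyset$ and each of its elements satisfies (i) some $j\in J$ has $\Pi_{\theta_j}>\Pi_{\tilde\theta_j}$ (post-entry) for all $\theta_j\in\operatorname{supp}\mu_j$, or (ii) for every $i$ all types in $\operatorname{supp}\tilde\mu^\varepsilon_i$ have equal post-entry average fitness. A pure profile $a^*$ is stable for degree $p$ if the point mass at $a^*$ is the aggregate outcome of a stable configuration for $p$. *)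

theory Defs
  imports Complex_Main
begin

text \<open>Two-player games, both action sets being two-element sets {C, D}
  (C_i = C, D_i = D for player i). Players are the naturals 1 and 2.\<close>

datatype act = C | D

type_synonym ptype = "act \<times> act \<Rightarrow> real"
type_synonym mixed = "act \<Rightarrow> real"

definition acts :: "act set" where "acts = {C, D}"

definition players :: "nat set" where "players = {1, 2}"

definition other :: "nat \<Rightarrow> nat" where "other i = 3 - i"

definition is_mixed :: "mixed \<Rightarrow> bool" where
  "is_mixed \<sigma> \<longleftrightarrow> (\<forall>a. 0 \<le> \<sigma> a) \<and> (\<Sum>a\<in>acts. \<sigma> a) = 1"

definition ext :: "ptype \<Rightarrow> mixed \<times> mixed \<Rightarrow> real" where
  "ext \<theta> \<sigma> = (\<Sum>a1\<in>acts. \<Sum>a2\<in>acts. fst \<sigma> a1 * snd \<sigma> a2 * \<theta> (a1, a2))"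

definition pr :: "nat \<Rightarrow> 'a \<Rightarrow> 'a \<Rightarrow> 'a \<times> 'a" where
  "pr i x y = (if i = 1 then (x, y) else (y, x))"

definition comp :: "'a \<times> 'a \<Rightarrow> nat \<Rightarrow> 'a" where
  "comp x i = (if i = 1 then fst x else snd x)"

definition supp :: "('a \<Rightarrow> real) \<Rightarrow> 'a set" where
  "supp \<mu> = {x. \<mu> x \<noteq> 0}"

definition fdist :: "('a \<Rightarrow> real) \<Rightarrow> bool" where
  "fdist \<mu> \<longleftrightarrow> finite (supp \<mu>) \<and> (\<forall>x. 0 \<le> \<mu> x) \<and> sum \<mu> (supp \<mu>) = 1"

text \<open>A product distribution mu = mu_1 x mu_2 is represented by its marginals
  mu :: nat => ptype => real (mu 1, mu 2).\<close>
definition suppP :: "(nat \<Rightarrow> ptype \<Rightarrow> real) \<Rightarrow> (ptype \<times> ptype) set" where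
  "suppP \<mu> = supp (\<mu> 1) \<times> supp (\<mu> 2)"

text \<open>Strategies: b i theta (play of player i when observing, theta a matched type profile)
  and s i theta_i (play of player i when not observing).\<close>

definition Ub :: "real \<Rightarrow> (ptype \<times> ptype) \<Rightarrow> nat \<Rightarrow> mixed
    \<Rightarrow> (nat \<Rightarrow> ptype \<times> ptype \<Rightarrow> mixed) \<Rightarrow> (nat \<Rightarrow> ptype \<Rightarrow> mixed) \<Rightarrow> real" where
  "Ub p \<theta> i \<sigma> b s =
     p * ext (comp \<theta> i) (pr i \<sigma> (b (other i) \<theta>))
     + (1 - p) * ext (comp \<theta> i) (pr i \<sigma> (s (other i) (comp \<theta> (other i))))"

definition Us :: "real \<Rightarrow> (nat \<Rightarrow> ptype \<Rightarrow> real) \<Rightarrow> nat \<Rightarrow> ptype \<Rightarrow> mixed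
    \<Rightarrow> (nat \<Rightarrow> ptype \<times> ptype \<Rightarrow> mixed) \<Rightarrow> (nat \<Rightarrow> ptype \<Rightarrow> mixed) \<Rightarrow> real" where
  "Us p \<mu> i t \<sigma> b s =
     (\<Sum>u\<in>supp (\<mu> (other i)). \<mu> (other i) u *
        (p * ext t (pr i \<sigma> (b (other i) (pr i t u)))
         + (1 - p) * ext t (pr i \<sigma> (s (other i) u))))"

definition is_eq :: "real \<Rightarrow> (nat \<Rightarrow> ptype \<Rightarrow> real)
    \<Rightarrow> (nat \<Rightarrow> ptype \<times> ptype \<Rightarrow> mixed) \<Rightarrow> (nat \<Rightarrow> ptype \<Rightarrow> mixed) \<Rightarrow> bool" where
  "is_eq p \<mu> b s \<longleftrightarrow>
     (\<forall>\<theta>\<in>suppP \<mu>. \<forall>i\<in>players. is_mixed (b i \<theta>) \<and>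
        (\<forall>\<sigma>. is_mixed \<sigma> \<longrightarrow> Ub p \<theta> i \<sigma> b s \<le> Ub p \<theta> i (b i \<theta>) b s)) \<and>
     (\<forall>i\<in>players. \<forall>t\<in>supp (\<mu> i). is_mixed (s i t) \<and>
        (\<forall>\<sigma>. is_mixed \<sigma> \<longrightarrow> Us p \<mu> i t \<sigma> b s \<le> Us p \<mu> i t (s i t) b s))"

text \<open>Weight of the set T of non-observing players, and the profile played.\<close>
definition wt :: "real \<Rightarrow> nat set \<Rightarrow> real" where
  "wt p T = p ^ (2 - card T) * (1 - p) ^ card T"

definition played :: "(nat \<Rightarrow> ptype \<times> ptype \<Rightarrow> mixed) \<Rightarrow> (nat \<Rightarrow> ptype \<Rightarrow> mixed)
    \<Rightarrow> ptype \<times> ptype \<Rightarrow> nat set \<Rightarrow> mixed \<times> mixed" where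
  "played b s \<theta> T =
     (if 1 \<in> T then s 1 (fst \<theta>) else b 1 \<theta>, if 2 \<in> T then s 2 (snd \<theta>) else b 2 \<theta>)"

definition outcome :: "real \<Rightarrow> (nat \<Rightarrow> ptype \<Rightarrow> real)
    \<Rightarrow> (nat \<Rightarrow> ptype \<times> ptype \<Rightarrow> mixed) \<Rightarrow> (nat \<Rightarrow> ptype \<Rightarrow> mixed) \<Rightarrow> act \<times> act \<Rightarrow> real" where
  "outcome p \<mu> b s a =
     (\<Sum>\<theta>\<in>suppP \<mu>. \<mu> 1 (fst \<theta>) * \<mu> 2 (snd \<theta>) *
        (\<Sum>T\<in>Pow players. wt p T *
           (fst (played b s \<theta> T) (fst a) * snd (played b s \<theta> T) (snd a))))"

text \<open>Average fitness of type t in population i; pi i is the material payoff of player i.\<close>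
definition fitness :: "(nat \<Rightarrow> ptype) \<Rightarrow> real \<Rightarrow> (nat \<Rightarrow> ptype \<Rightarrow> real)
    \<Rightarrow> (nat \<Rightarrow> ptype \<times> ptype \<Rightarrow> mixed) \<Rightarrow> (nat \<Rightarrow> ptype \<Rightarrow> mixed) \<Rightarrow> nat \<Rightarrow> ptype \<Rightarrow> real" where
  "fitness \<pi> p \<mu> b s i t =
     (\<Sum>u\<in>supp (\<mu> (other i)). \<mu> (other i) u *
        (\<Sum>T\<in>Pow players. wt p T * ext (\<pi> i) (played b s (pr i t u) T)))"

definition balanced :: "(nat \<Rightarrow> ptype) \<Rightarrow> real \<Rightarrow> (nat \<Rightarrow> ptype \<Rightarrow> real)
    \<Rightarrow> (nat \<Rightarrow> ptype \<times> ptype \<Rightarrow> mixed) \<Rightarrow> (nat \<Rightarrow> ptype \<Rightarrow> mixed) \<Rightarrow> bool" where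
  "balanced \<pi> p \<mu> b s \<longleftrightarrow>
     (\<forall>i\<in>players. \<forall>t\<in>supp (\<mu> i). \<forall>t'\<in>supp (\<mu> i).
        fitness \<pi> p \<mu> b s i t = fitness \<pi> p \<mu> b s i t')"

definition postentry :: "(nat \<Rightarrow> ptype \<Rightarrow> real) \<Rightarrow> nat set \<Rightarrow> (nat \<Rightarrow> ptype)
    \<Rightarrow> (nat \<Rightarrow> real) \<Rightarrow> nat \<Rightarrow> ptype \<Rightarrow> real" where
  "postentry \<mu> J m eps i =
     (if i \<in> J then (\<lambda>x. (1 - eps i) * \<mu> i x + eps i * (if x = m i then 1 else 0)) else \<mu> i)"

definition mdist :: "mixed \<Rightarrow> mixed \<Rightarrow> real" where
  "mdist \<sigma> \<tau> = Max ((\<lambda>a. \<bar>\<sigma> a - \<tau> a\<bar>) ` acts)"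

text \<open>Membership in the nearby set B_p^eta(mu'; b, s), mu the pre-entry population.\<close>
definition nearby :: "real \<Rightarrow> (nat \<Rightarrow> ptype \<Rightarrow> real) \<Rightarrow> (nat \<Rightarrow> ptype \<Rightarrow> real)
    \<Rightarrow> (nat \<Rightarrow> ptype \<times> ptype \<Rightarrow> mixed) \<Rightarrow> (nat \<Rightarrow> ptype \<Rightarrow> mixed) \<Rightarrow> real
    \<Rightarrow> (nat \<Rightarrow> ptype \<times> ptype \<Rightarrow> mixed) \<Rightarrow> (nat \<Rightarrow> ptype \<Rightarrow> mixed) \<Rightarrow> bool" where
  "nearby p \<mu>' \<mu> b s \<eta> b' s' \<longleftrightarrow>
     is_eq p \<mu>' b' s' \<and>
     (\<forall>\<theta>\<in>suppP \<mu>. \<forall>i\<in>players.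
        mdist (b' i \<theta>) (b i \<theta>) \<le> \<eta> \<and> mdist (s' i (comp \<theta> i)) (s i (comp \<theta> i)) \<le> \<eta>)"

definition stable :: "(nat \<Rightarrow> ptype) \<Rightarrow> real \<Rightarrow> (nat \<Rightarrow> ptype \<Rightarrow> real)
    \<Rightarrow> (nat \<Rightarrow> ptype \<times> ptype \<Rightarrow> mixed) \<Rightarrow> (nat \<Rightarrow> ptype \<Rightarrow> mixed) \<Rightarrow> bool" where
  "stable \<pi> p \<mu> b s \<longleftrightarrow>
     balanced \<pi> p \<mu> b s \<and>
     (\<forall>J m \<eta>. J \<subseteq> players \<and> J \<noteq> {} \<and> (\<forall>j\<in>J. m j \<notin> supp (\<mu> j)) \<and> 0 < \<eta> \<longrightarrow>
        (\<exists>\<eta>b \<epsilon>b. 0 \<le> \<eta>b \<and> \<eta>b < \<eta> \<and> 0 < \<epsilon>b \<and> \<epsilon>b < 1 \<and>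
           (\<forall>eps. (\<forall>j\<in>J. 0 < eps j \<and> eps j < 1) \<and> 0 < Max (eps ` J) \<and> Max (eps ` J) < \<epsilon>b \<longrightarrow>
              (\<exists>b' s'. nearby p (postentry \<mu> J m eps) \<mu> b s \<eta>b b' s') \<and>
              (\<forall>b' s'. nearby p (postentry \<mu> J m eps) \<mu> b s \<eta>b b' s' \<longrightarrow>
                 (\<exists>j\<in>J. \<forall>t\<in>supp (\<mu> j).
                    fitness \<pi> p (postentry \<mu> J m eps) b' s' j t
                    > fitness \<pi> p (postentry \<mu> J m eps) b' s' j (m j)) \<or>
                 (\<forall>i\<in>players. \<forall>t\<in>supp (postentry \<mu> J m eps i).
                    \<forall>t'\<in>supp (postentry \<mu> J m eps i).
                    fitness \<pi> p (postentry \<mu> J m eps) b' s' i t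
                    = fitness \<pi> p (postentry \<mu> J m eps) b' s' i t')))))"

definition stable_profile :: "(nat \<Rightarrow> ptype) \<Rightarrow> real \<Rightarrow> act \<times> act \<Rightarrow> bool" where
  "stable_profile \<pi> p astar \<longleftrightarrow>
     (\<exists>\<mu> b s. fdist (\<mu> 1) \<and> fdist (\<mu> 2) \<and> is_eq p \<mu> b s \<and> stable \<pi> p \<mu> b s \<and>
        (\<forall>a. outcome p \<mu> b s a = (if a = astar then 1 else 0)))"

fun pd_pay :: "act \<times> act \<Rightarrow> real \<times> real" where
  "pd_pay (C, C) = (2, 2)"
| "pd_pay (C, D) = (0, 3)"
| "pd_pay (D, C) = (3, 0)"
| "pd_pay (D, D) = (1, 1)"

definition pd :: "nat \<Rightarrow> ptype" where
  "pd i = (\<lambda>a. if i = 1 then fst (pd_pay a) else snd (pd_pay a))"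

end

theory Submission
  imports Defs
begin

text \<open>
  If the aggregate outcome is the point mass on (D, D), every incumbent plays D in every
  contingency, so every incumbent type weakly prefers D against D.  Let both populations be
  invaded by a "secret handshake" type that values mutual cooperation at K \<ge> (1 - p) / p: it
  cooperates when it observes a fellow mutant and defects otherwise.  For small mutant shares this
  is a post-entry equilibrium that leaves the incumbents' play untouched, and incumbents still earn
  1, while a mutant meeting a mutant earns 1 + p in material payoffs, so mutants earn 1 + e p.
  Hence neither escape clause of stability applies.
\<close>

lemma sum_acts [simp]: "(\<Sum>a\<in>acts. f a) = f C + f D"
  by (simp add: acts_def)

lemma ext_pair:
  "ext t (x, y) = x C * y C * t (C, C) + x C * y D * t (C, D) + x D * y C * t (D, C) + x D * y D * t (D, D)"
  by (simp add: ext_def algebra_simps)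

lemma is_mixed_iff: "is_mixed \<sigma> \<longleftrightarrow> 0 \<le> \<sigma> C \<and> 0 \<le> \<sigma> D \<and> \<sigma> C + \<sigma> D = 1"
  unfolding is_mixed_def sum_acts by (metis (full_types) act.exhaust)

definition pure :: "act \<Rightarrow> mixed" where
  "pure a = (\<lambda>x. if x = a then 1 else 0)"

lemma pure_simps [simp]: "pure C C = 1" "pure C D = 0" "pure D C = 0" "pure D D = 1"
  by (simp_all add: pure_def)

lemma is_mixed_pure [simp]: "is_mixed (pure a)"
  by (cases a) (simp_all add: is_mixed_iff)

lemma ext_pr_pure: "ext t (pr i \<sigma> (pure a)) = \<sigma> C * t (pr i C a) + \<sigma> D * t (pr i D a)"
  by (cases a) (simp_all add: pr_def ext_pair)

lemma pure_D_best_reply: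
  assumes "t (pr i C D) \<le> t (pr i D D)" and "is_mixed \<sigma>"
  shows "ext t (pr i \<sigma> (pure D)) \<le> ext t (pr i (pure D) (pure D))"
proof -
  have "\<sigma> C * t (pr i C D) \<le> \<sigma> C * t (pr i D D)"
    using assms by (simp add: is_mixed_iff mult_left_mono)
  then have "\<sigma> C * t (pr i C D) + \<sigma> D * t (pr i D D) \<le> (\<sigma> C + \<sigma> D) * t (pr i D D)"
    by (simp add: distrib_right)
  then show ?thesis
    using assms(2) by (simp add: ext_pr_pure is_mixed_iff)
qed

lemma mixed_product_point_mass:
  assumes x: "is_mixed x" and y: "is_mixed y"
    and off: "\<And>a a'. (a, a') \<noteq> (a1, a2) \<Longrightarrow> x a * y a' = 0"
  shows "x = pure a1 \<and> y = pure a2"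
proof -
  have "x a = 0" if "a \<noteq> a1" for a
  proof -
    have "x a = x a * y C + x a * y D"
      using y by (simp add: is_mixed_iff flip: distrib_left)
    moreover have "x a * y C = 0" "x a * y D = 0"
      using off that by auto
    ultimately show ?thesis
      by linarith
  qed
  moreover have "y a' = 0" if "a' \<noteq> a2" for a'
  proof -
    have "y a' = x C * y a' + x D * y a'"
      using x by (simp add: is_mixed_iff flip: distrib_right)
    moreover have "x C * y a' = 0" "x D * y a' = 0"
      using off that by auto
    ultimately show ?thesis
      by linarith
  qed
  ultimately have "x a = pure a1 a" "y a = pure a2 a" for a
    using x y by (cases a; cases a1; cases a2; simp add: is_mixed_iff)+
  then show ?thesis
    by (simp add: fun_eq_iff)
qed

lemma players_cases: "i \<in> players \<Longrightarrow> i = 1 \<or> i = 2"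
  by (auto simp: players_def)

lemma other_in_players: "i \<in> players \<Longrightarrow> other i \<in> players"
  by (auto simp: players_def other_def)

lemma comp_pr:
  "i \<in> players \<Longrightarrow> comp (pr i x y) i = x"
  "i \<in> players \<Longrightarrow> comp (pr i x y) (other i) = y"
  by (auto dest!: players_cases simp: comp_def pr_def other_def)

lemma pr_diag: "pr i x x = (x, x)"
  by (simp add: pr_def)

lemma pr_eq_diag: "pr i x y = (z, z) \<longleftrightarrow> x = z \<and> y = z"
  by (auto simp: pr_def)

lemma sum_Pow_players: "(\<Sum>T\<in>Pow players. f T) = f {} + f {1} + f {2} + f {1, 2}"
proof -
  have "Pow players = {{}, {1}, {2}, {1, 2}}"
    by (auto simp: players_def)
  then show ?thesis
    by (simp add: add.assoc)
qed

lemma wt_simps: "wt p {} = p\<^sup>2" "wt p {1} = p * (1 - p)" "wt p {2} = p * (1 - p)" "wt p {1, 2} = (1 - p)\<^sup>2"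
  by (simp_all add: wt_def power2_eq_square)

lemma fdist_supp_pos: "fdist \<mu> \<Longrightarrow> x \<in> supp \<mu> \<Longrightarrow> 0 < \<mu> x"
  unfolding fdist_def supp_def by (simp add: order_less_le)

lemma fdist_supp_nonempty: "fdist \<mu> \<Longrightarrow> supp \<mu> \<noteq> {}"
  unfolding fdist_def by auto

lemma fdist_expect_const: "fdist \<mu> \<Longrightarrow> (\<Sum>u\<in>supp \<mu>. \<mu> u * c) = c"
  by (simp add: fdist_def flip: sum_distrib_right)

lemma pr_mem_suppP:
  "i \<in> players \<Longrightarrow> t \<in> supp (\<mu> i) \<Longrightarrow> u \<in> supp (\<mu> (other i)) \<Longrightarrow> pr i t u \<in> suppP \<mu>"
  by (auto simp: players_def suppP_def pr_def other_def)

lemma comp_mem_supp: "\<theta> \<in> suppP \<mu> \<Longrightarrow> i \<in> players \<Longrightarrow> comp \<theta> i \<in> supp (\<mu> i)"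
  by (auto simp: players_def suppP_def comp_def)

lemma supp_postentry:
  assumes "i \<in> J" "fdist (\<mu> i)" "m i \<notin> supp (\<mu> i)" "0 < eps i" "eps i < 1"
  shows "supp (postentry \<mu> J m eps i) = insert (m i) (supp (\<mu> i))"
  using assms unfolding postentry_def fdist_def supp_def
  by (auto simp: add_nonneg_eq_0_iff)

lemma sum_postentry:
  assumes "i \<in> J" "fdist (\<mu> i)" "m i \<notin> supp (\<mu> i)" "0 < eps i" "eps i < 1"
  shows "(\<Sum>u\<in>supp (postentry \<mu> J m eps i). postentry \<mu> J m eps i u * f u)
    = eps i * f (m i) + (1 - eps i) * (\<Sum>u\<in>supp (\<mu> i). \<mu> i u * f u)"
proof -
  have "finite (supp (\<mu> i))" "\<mu> i (m i) = 0"
    using assms(2,3) by (auto simp: fdist_def supp_def)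
  moreover have "(\<Sum>u\<in>supp (\<mu> i). postentry \<mu> J m eps i u * f u)
      = (1 - eps i) * (\<Sum>u\<in>supp (\<mu> i). \<mu> i u * f u)"
    using assms(1,3) by (auto simp: postentry_def sum_distrib_left intro!: sum.cong)
  ultimately show ?thesis
    using assms by (simp add: supp_postentry) (simp add: postentry_def)
qed

lemma is_eq_played_mixed:
  assumes "is_eq p \<mu> b s" and "\<theta> \<in> suppP \<mu>"
  shows "is_mixed (fst (played b s \<theta> T))" and "is_mixed (snd (played b s \<theta> T))"
proof -
  have b: "is_mixed (b i \<theta>)" and s: "is_mixed (s i (comp \<theta> i))" if "i \<in> players" for i
    using assms that comp_mem_supp[OF assms(2) that] unfolding is_eq_def by blast+
  have "(1::nat) \<in> players" "(2::nat) \<in> players"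
    by (simp_all add: players_def)
  then have "is_mixed (b 1 \<theta>)" "is_mixed (b 2 \<theta>)" "is_mixed (s 1 (fst \<theta>))" "is_mixed (s 2 (snd \<theta>))"
    using b s by (force simp: comp_def)+
  then show "is_mixed (fst (played b s \<theta> T))" and "is_mixed (snd (played b s \<theta> T))"
    by (simp_all add: played_def)
qed

lemma outcome_eq_0_imp_played_eq_0:
  assumes p: "0 < p" "p < 1" and fd: "fdist (\<mu> 1)" "fdist (\<mu> 2)" and eq: "is_eq p \<mu> b s"
    and out: "outcome p \<mu> b s a = 0" and \<theta>: "\<theta> \<in> suppP \<mu>" and T: "T \<in> Pow players"
  shows "fst (played b s \<theta> T) (fst a) * snd (played b s \<theta> T) (snd a) = 0"
proof -
  define w where "w \<theta>' T' = wt p T' * (fst (played b s \<theta>' T') (fst a) * snd (played b s \<theta>' T') (snd a))"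
    for \<theta>' T'
  have wt_pos: "0 < wt p T'" for T'
    using p by (simp add: wt_def)
  have w_nonneg: "0 \<le> w \<theta>' T'" if "\<theta>' \<in> suppP \<mu>" for \<theta>' T'
    using is_eq_played_mixed[OF eq that] wt_pos[of T']
    by (simp add: w_def is_mixed_def)
  have fin: "finite (suppP \<mu>)" "finite (Pow players)"
    using fd by (simp_all add: suppP_def fdist_def players_def)
  have total: "(\<Sum>\<theta>'\<in>suppP \<mu>. \<mu> 1 (fst \<theta>') * \<mu> 2 (snd \<theta>') * sum (w \<theta>') (Pow players)) = 0"
    using out by (simp add: outcome_def w_def)
  have summand_nonneg: "0 \<le> \<mu> 1 (fst \<theta>') * \<mu> 2 (snd \<theta>') * sum (w \<theta>') (Pow players)"
    if "\<theta>' \<in> suppP \<mu>" for \<theta>'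
    using fd w_nonneg[OF that] by (intro mult_nonneg_nonneg sum_nonneg) (auto simp: fdist_def)
  have "\<mu> 1 (fst \<theta>) * \<mu> 2 (snd \<theta>) * sum (w \<theta>) (Pow players) = 0"
    using sum_nonneg_0[OF fin(1) summand_nonneg total \<theta>] .
  moreover have "0 < \<mu> 1 (fst \<theta>)" "0 < \<mu> 2 (snd \<theta>)"
    using \<theta> fd by (auto simp: suppP_def fdist_supp_pos)
  ultimately have "sum (w \<theta>) (Pow players) = 0"
    by simp
  then have "w \<theta> T = 0"
    using T by (simp add: sum_nonneg_eq_0_iff[OF fin(2)] w_nonneg[OF \<theta>])
  then show ?thesis
    using wt_pos[of T] by (simp add: w_def)
qed

lemma outcome_point_mass_imp_pure:
  assumes p: "0 < p" "p < 1" and fd: "fdist (\<mu> 1)" "fdist (\<mu> 2)" and eq: "is_eq p \<mu> b s"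
    and out: "\<forall>a. outcome p \<mu> b s a = (if a = (a1, a2) then 1 else 0)" and \<theta>: "\<theta> \<in> suppP \<mu>"
  shows "b 1 \<theta> = pure a1 \<and> b 2 \<theta> = pure a2 \<and> s 1 (fst \<theta>) = pure a1 \<and> s 2 (snd \<theta>) = pure a2"
proof -
  have pure_played: "fst (played b s \<theta> T) = pure a1 \<and> snd (played b s \<theta> T) = pure a2"
    if "T \<in> Pow players" for T
  proof (rule mixed_product_point_mass)
    fix a a' :: act
    assume "(a, a') \<noteq> (a1, a2)"
    then have "outcome p \<mu> b s (a, a') = 0"
      using out by simp
    from outcome_eq_0_imp_played_eq_0[OF p fd eq this \<theta> that]
    show "fst (played b s \<theta> T) a * snd (played b s \<theta> T) a' = 0"
      by simp
  qed (use is_eq_played_mixed[OF eq \<theta>] in auto)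
  have "played b s \<theta> {} = (b 1 \<theta>, b 2 \<theta>)" "played b s \<theta> players = (s 1 (fst \<theta>), s 2 (snd \<theta>))"
    by (simp_all add: played_def players_def)
  with pure_played[of "{}"] pure_played[of players] show ?thesis
    by simp
qed

lemma point_mass_DD_imp_all_D:
  assumes p: "0 < p" "p < 1" and fd: "fdist (\<mu> 1)" "fdist (\<mu> 2)" and eq: "is_eq p \<mu> b s"
    and out: "\<forall>a. outcome p \<mu> b s a = (if a = (D, D) then 1 else 0)"
  shows "\<And>\<theta> i. \<theta> \<in> suppP \<mu> \<Longrightarrow> i \<in> players \<Longrightarrow> b i \<theta> = pure D"
    and "\<And>i t. i \<in> players \<Longrightarrow> t \<in> supp (\<mu> i) \<Longrightarrow> s i t = pure D"
proof -
  note pure = outcome_point_mass_imp_pure[OF p fd eq out]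
  show "b i \<theta> = pure D" if "\<theta> \<in> suppP \<mu>" "i \<in> players" for \<theta> i
    using pure[OF that(1)] players_cases[OF that(2)] by blast
  show "s i t = pure D" if i: "i \<in> players" and t: "t \<in> supp (\<mu> i)" for i t
  proof -
    have "fdist (\<mu> (other i))"
      using fd i by (auto simp: players_def other_def)
    then obtain u where "u \<in> supp (\<mu> (other i))"
      using fdist_supp_nonempty by blast
    then have "pr i t u \<in> suppP \<mu>"
      using pr_mem_suppP[where \<mu> = \<mu>, OF i t] by blast
    from pure[OF this] show ?thesis
      using players_cases[OF i] unfolding pr_def by auto
  qed
qed

lemma all_D_imp_D_best_reply:
  assumes eq: "is_eq p \<mu> b s"
    and b_D: "\<And>\<theta> i. \<theta> \<in> suppP \<mu> \<Longrightarrow> i \<in> players \<Longrightarrow> b i \<theta> = pure D"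
    and s_D: "\<And>i t. i \<in> players \<Longrightarrow> t \<in> supp (\<mu> i) \<Longrightarrow> s i t = pure D"
    and i: "i \<in> players" and t: "t \<in> supp (\<mu> i)" and u: "u \<in> supp (\<mu> (other i))"
  shows "t (pr i C D) \<le> t (pr i D D)"
proof -
  define \<theta> where "\<theta> = pr i t u"
  have \<theta>: "\<theta> \<in> suppP \<mu>"
    unfolding \<theta>_def using i t u by (rule pr_mem_suppP)
  have Ub: "Ub p \<theta> i \<sigma> b s = ext t (pr i \<sigma> (pure D))" for \<sigma>
    using b_D[OF \<theta> other_in_players[OF i]] s_D[OF other_in_players[OF i] u]
    by (simp add: Ub_def \<theta>_def comp_pr[OF i] algebra_simps)
  have "Ub p \<theta> i (pure C) b s \<le> Ub p \<theta> i (b i \<theta>) b s"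
    using eq \<theta> i is_mixed_pure unfolding is_eq_def by blast
  then show ?thesis
    using b_D[OF \<theta> i] by (simp add: Ub ext_pr_pure)
qed

definition handshake :: "real \<Rightarrow> ptype" where
  "handshake K = (\<lambda>a. if a = (C, C) then K else if a = (D, D) then 1 else 0)"

lemma handshake_simps [simp]:
  "handshake K (C, C) = K" "handshake K (D, D) = 1"
  "handshake K (pr i C C) = K" "handshake K (pr i C D) = 0"
  "handshake K (pr i D C) = 0" "handshake K (pr i D D) = 1"
  by (simp_all add: handshake_def pr_def)

lemma ex_fresh_handshake:
  assumes "finite S"
  obtains K where "c \<le> K" and "handshake K \<notin> S"
proof -
  have "inj handshake"
    by (rule injI) (metis handshake_simps(1))
  then have "finite (handshake -` S)"
    by (rule finite_vimageI[OF assms])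
  then have "{c..} - handshake -` S \<noteq> {}"
    using infinite_Ici Diff_infinite_finite infinite_imp_nonempty by metis
  then show thesis
    using that by blast
qed

definition handshake_play :: "real \<Rightarrow> nat \<Rightarrow> ptype \<times> ptype \<Rightarrow> mixed" where
  "handshake_play K i \<theta> = (if \<theta> = (handshake K, handshake K) then pure C else pure D)"

text \<open>Clauses (i) and (ii) in the definition of stability.\<close>
definition entry_contained :: "(nat \<Rightarrow> ptype) \<Rightarrow> real \<Rightarrow> (nat \<Rightarrow> ptype \<Rightarrow> real) \<Rightarrow> nat set
    \<Rightarrow> (nat \<Rightarrow> ptype) \<Rightarrow> (nat \<Rightarrow> ptype \<Rightarrow> real)
    \<Rightarrow> (nat \<Rightarrow> ptype \<times> ptype \<Rightarrow> mixed) \<Rightarrow> (nat \<Rightarrow> ptype \<Rightarrow> mixed) \<Rightarrow> bool" where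
  "entry_contained \<pi> p \<mu> J m \<mu>' b' s' \<longleftrightarrow>
     (\<exists>j\<in>J. \<forall>t\<in>supp (\<mu> j). fitness \<pi> p \<mu>' b' s' j t > fitness \<pi> p \<mu>' b' s' j (m j)) \<or>
     (\<forall>i\<in>players. \<forall>t\<in>supp (\<mu>' i). \<forall>t'\<in>supp (\<mu>' i).
        fitness \<pi> p \<mu>' b' s' i t = fitness \<pi> p \<mu>' b' s' i t')"

lemma nearby_mono: "nearby p \<mu>' \<mu> b s \<eta> b' s' \<Longrightarrow> \<eta> \<le> \<eta>' \<Longrightarrow> nearby p \<mu>' \<mu> b s \<eta>' b' s'"
  unfolding nearby_def using order_trans by blast

lemma stable_imp_entry_contained:
  assumes st: "stable \<pi> p \<mu> b s" and fresh: "\<And>j. j \<in> players \<Longrightarrow> m j \<notin> supp (\<mu> j)"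
  obtains \<epsilon> where "0 < \<epsilon>" and "\<epsilon> \<le> 1"
    and "\<And>e b' s'. 0 < e \<Longrightarrow> e < \<epsilon> \<Longrightarrow> nearby p (postentry \<mu> players m (\<lambda>_. e)) \<mu> b s 0 b' s'
      \<Longrightarrow> entry_contained \<pi> p \<mu> players m (postentry \<mu> players m (\<lambda>_. e)) b' s'"
proof -
  have "players \<subseteq> players \<and> players \<noteq> {} \<and> (\<forall>j\<in>players. m j \<notin> supp (\<mu> j)) \<and> (0::real) < 1"
    using fresh by (auto simp: players_def)
  from st[unfolded stable_def, THEN conjunct2, rule_format, of players m 1, OF this]
  obtain \<eta>b \<epsilon>b where \<eta>b: "0 \<le> \<eta>b" and \<epsilon>b: "0 < \<epsilon>b" "\<epsilon>b < 1"
    and invade: "\<forall>eps. (\<forall>j\<in>players. 0 < eps j \<and> eps j < 1) \<and> 0 < Max (eps ` players) \<and> Max (eps ` players) < \<epsilon>b \<longrightarrow>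
        (\<forall>b' s'. nearby p (postentry \<mu> players m eps) \<mu> b s \<eta>b b' s' \<longrightarrow>
           entry_contained \<pi> p \<mu> players m (postentry \<mu> players m eps) b' s')"
    by (elim exE conjE) (rule that, assumption+, unfold entry_contained_def, blast)
  show thesis
  proof (rule that[OF \<epsilon>b(1) less_imp_le[OF \<epsilon>b(2)]])
    fix e b' s'
    assume e: "0 < e" "e < \<epsilon>b" and near: "nearby p (postentry \<mu> players m (\<lambda>_. e)) \<mu> b s 0 b' s'"
    have "Max ((\<lambda>_. e) ` players) = e"
      by (simp add: players_def)
    with e \<epsilon>b have "(\<forall>j\<in>players. 0 < e \<and> e < 1) \<and> 0 < Max ((\<lambda>_. e) ` players) \<and> Max ((\<lambda>_. e) ` players) < \<epsilon>b"
      by simp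
    with invade[rule_format, of "\<lambda>_. e"] nearby_mono[OF near \<eta>b]
    show "entry_contained \<pi> p \<mu> players m (postentry \<mu> players m (\<lambda>_. e)) b' s'"
      by blast
  qed
qed

text \<open>
  The bound on K makes cooperation a best reply of an observing mutant matched with a mutant;
  the bound on the share e makes defection the best reply of a non-observing mutant.
\<close>
locale handshake_invasion =
  fixes p :: real and \<mu> :: "nat \<Rightarrow> ptype \<Rightarrow> real" and K e :: real
  assumes p: "0 < p"
    and fdist: "\<And>i. i \<in> players \<Longrightarrow> fdist (\<mu> i)"
    and fresh: "\<And>i. i \<in> players \<Longrightarrow> handshake K \<notin> supp (\<mu> i)"
    and D_best_reply: "\<And>i t. i \<in> players \<Longrightarrow> t \<in> supp (\<mu> i) \<Longrightarrow> t (pr i C D) \<le> t (pr i D D)"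
    and K: "1 - p \<le> p * K"
    and e: "0 < e" "e < 1" "e * (p * K + p) \<le> 1"
begin

abbreviation "mutant \<equiv> handshake K"
abbreviation "\<mu>' \<equiv> postentry \<mu> players (\<lambda>_. mutant) (\<lambda>_. e)"
abbreviation "b' \<equiv> handshake_play K"
abbreviation "s' \<equiv> \<lambda>(_::nat) (_::ptype). pure D"

lemma supp_post: "i \<in> players \<Longrightarrow> supp (\<mu>' i) = insert mutant (supp (\<mu> i))"
  using supp_postentry[of i players \<mu> "\<lambda>_. mutant" "\<lambda>_. e"] fdist fresh e by simp

lemma expect_post:
  "i \<in> players \<Longrightarrow> (\<Sum>u\<in>supp (\<mu>' i). \<mu>' i u * f u) = e * f mutant + (1 - e) * (\<Sum>u\<in>supp (\<mu> i). \<mu> i u * f u)"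
  using sum_postentry[of i players \<mu> "\<lambda>_. mutant" "\<lambda>_. e"] fdist fresh e by simp

lemma expect_post_const:
  assumes "i \<in> players"
  shows "(\<Sum>u\<in>supp (\<mu>' i). \<mu>' i u * c) = c"
proof -
  have "(\<Sum>u\<in>supp (\<mu>' i). \<mu>' i u * c) = e * c + (1 - e) * (\<Sum>u\<in>supp (\<mu> i). \<mu> i u * c)"
    by (rule expect_post[OF assms])
  also have "\<dots> = e * c + (1 - e) * c"
    by (simp only: fdist_expect_const[OF fdist[OF assms]])
  finally show ?thesis
    by (simp add: algebra_simps)
qed

lemma post_D_best_reply: "i \<in> players \<Longrightarrow> t \<in> supp (\<mu>' i) \<Longrightarrow> t (pr i C D) \<le> t (pr i D D)"
  using supp_post D_best_reply by auto

lemma Ub_post: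
  "Ub p \<theta> i \<sigma> b' s' =
     (if \<theta> = (mutant, mutant) then p * K * \<sigma> C + (1 - p) * \<sigma> D else ext (comp \<theta> i) (pr i \<sigma> (pure D)))"
  by (simp add: Ub_def handshake_play_def comp_def ext_pr_pure algebra_simps)

lemma observing_best_reply:
  assumes \<theta>: "\<theta> \<in> suppP \<mu>'" and i: "i \<in> players" and \<sigma>: "is_mixed \<sigma>"
  shows "Ub p \<theta> i \<sigma> b' s' \<le> Ub p \<theta> i (b' i \<theta>) b' s'"
proof (cases "\<theta> = (mutant, mutant)")
  case True
  have "(1 - p) * \<sigma> D \<le> p * K * \<sigma> D"
    using K \<sigma> by (simp add: is_mixed_iff mult_right_mono)
  then have "p * K * \<sigma> C + (1 - p) * \<sigma> D \<le> p * K * (\<sigma> C + \<sigma> D)"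
    by (simp add: algebra_simps)
  then show ?thesis
    using True \<sigma> by (simp add: Ub_post handshake_play_def is_mixed_iff)
next
  case False
  have "comp \<theta> i (pr i C D) \<le> comp \<theta> i (pr i D D)"
    using post_D_best_reply[OF i comp_mem_supp[OF \<theta> i]] .
  from pure_D_best_reply[OF this \<sigma>] show ?thesis
    using False by (simp add: Ub_post handshake_play_def)
qed

lemma Us_incumbent:
  assumes "i \<in> players" and "t \<noteq> mutant"
  shows "Us p \<mu>' i t \<sigma> b' s' = ext t (pr i \<sigma> (pure D))"
proof -
  have "Us p \<mu>' i t \<sigma> b' s' = (\<Sum>u\<in>supp (\<mu>' (other i)). \<mu>' (other i) u * ext t (pr i \<sigma> (pure D)))"
    unfolding Us_def using assms(2) by (simp add: handshake_play_def pr_eq_diag algebra_simps)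
  then show ?thesis
    using expect_post_const[OF other_in_players[OF assms(1)]] by simp
qed

lemma Us_mutant:
  assumes i: "i \<in> players"
  shows "Us p \<mu>' i mutant \<sigma> b' s' = e * p * K * \<sigma> C + (1 - e * p) * \<sigma> D"
proof -
  have o: "other i \<in> players"
    using other_in_players[OF i] .
  define g where "g u = p * ext mutant (pr i \<sigma> (b' (other i) (pr i mutant u))) + (1 - p) * ext mutant (pr i \<sigma> (pure D))"
    for u
  have g_mutant: "g mutant = p * K * \<sigma> C + (1 - p) * \<sigma> D"
    by (simp add: g_def handshake_play_def ext_pr_pure pr_diag)
  have "(\<Sum>u\<in>supp (\<mu> (other i)). \<mu> (other i) u * g u) = (\<Sum>u\<in>supp (\<mu> (other i)). \<mu> (other i) u * \<sigma> D)"
    using fresh[OF o] by (intro sum.cong) (auto simp: g_def handshake_play_def pr_eq_diag ext_pr_pure algebra_simps)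
  also have "\<dots> = \<sigma> D"
    by (rule fdist_expect_const[OF fdist[OF o]])
  finally have "Us p \<mu>' i mutant \<sigma> b' s' = e * g mutant + (1 - e) * \<sigma> D"
    unfolding Us_def expect_post[OF o] g_def by simp
  then show ?thesis
    by (simp add: g_mutant algebra_simps)
qed

lemma blind_best_reply:
  assumes t: "t \<in> supp (\<mu>' i)" and i: "i \<in> players" and \<sigma>: "is_mixed \<sigma>"
  shows "Us p \<mu>' i t \<sigma> b' s' \<le> Us p \<mu>' i t (pure D) b' s'"
proof (cases "t = mutant")
  case True
  have \<sigma>D: "\<sigma> D = 1 - \<sigma> C"
    using \<sigma> by (simp add: is_mixed_iff)
  have "e * p * K * \<sigma> C + (1 - e * p) * \<sigma> D = (1 - e * p) + \<sigma> C * (e * (p * K + p) - 1)"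
    unfolding \<sigma>D by (simp add: algebra_simps)
  also have "\<dots> \<le> 1 - e * p"
    using e(3) \<sigma> mult_nonneg_nonpos[of "\<sigma> C" "e * (p * K + p) - 1"] by (simp add: is_mixed_iff)
  finally show ?thesis
    using True by (simp only: Us_mutant[OF i] pure_simps) simp
next
  case False
  from pure_D_best_reply[OF post_D_best_reply[OF i t] \<sigma>] show ?thesis
    using False by (simp add: Us_incumbent[OF i])
qed

lemma post_is_eq: "is_eq p \<mu>' b' s'"
  unfolding is_eq_def
proof (intro conjI ballI allI impI)
  fix \<theta> i \<sigma>
  assume "\<theta> \<in> suppP \<mu>'" "i \<in> players" "is_mixed \<sigma>"
  then show "Ub p \<theta> i \<sigma> b' s' \<le> Ub p \<theta> i (b' i \<theta>) b' s'"
    by (rule observing_best_reply)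
next
  fix i t \<sigma>
  assume "i \<in> players" "t \<in> supp (\<mu>' i)" "is_mixed \<sigma>"
  then show "Us p \<mu>' i t \<sigma> b' s' \<le> Us p \<mu>' i t (s' i t) b' s'"
    using blind_best_reply by simp
qed (simp_all add: handshake_play_def)

lemma nearby_post:
  assumes b_D: "\<And>\<theta> i. \<theta> \<in> suppP \<mu> \<Longrightarrow> i \<in> players \<Longrightarrow> b i \<theta> = pure D"
    and s_D: "\<And>i t. i \<in> players \<Longrightarrow> t \<in> supp (\<mu> i) \<Longrightarrow> s i t = pure D"
  shows "nearby p \<mu>' \<mu> b s 0 b' s'"
  unfolding nearby_def
proof (intro conjI ballI post_is_eq)
  fix \<theta> i
  assume \<theta>: "\<theta> \<in> suppP \<mu>" and i: "i \<in> players"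
  have "\<theta> \<noteq> (mutant, mutant)"
    using \<theta> fresh[of 1] by (auto simp: suppP_def players_def)
  then have "b' i \<theta> = b i \<theta>" "s' i (comp \<theta> i) = s i (comp \<theta> i)"
    using b_D[OF \<theta> i] s_D[OF i comp_mem_supp[OF \<theta> i]] by (simp_all add: handshake_play_def)
  then show "mdist (b' i \<theta>) (b i \<theta>) \<le> 0" "mdist (s' i (comp \<theta> i)) (s i (comp \<theta> i)) \<le> 0"
    by (simp_all add: mdist_def acts_def)
qed

lemma payoff_post:
  assumes "i \<in> players"
  shows "(\<Sum>T\<in>Pow players. wt p T * ext (pd i) (played b' s' \<theta> T)) = (if \<theta> = (mutant, mutant) then 1 + p else 1)"
  using players_cases[OF assms]
  unfolding sum_Pow_players wt_simps
  by (auto simp: played_def handshake_play_def ext_pair pd_def power2_eq_square algebra_simps)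

lemma fitness_incumbent:
  assumes i: "i \<in> players" and t: "t \<in> supp (\<mu> i)"
  shows "fitness pd p \<mu>' b' s' i t = 1"
proof -
  have "t \<noteq> mutant"
    using t fresh[OF i] by blast
  then have "fitness pd p \<mu>' b' s' i t = (\<Sum>u\<in>supp (\<mu>' (other i)). \<mu>' (other i) u * 1)"
    unfolding fitness_def payoff_post[OF i] by (simp add: pr_eq_diag)
  also have "\<dots> = 1"
    by (rule expect_post_const[OF other_in_players[OF i]])
  finally show ?thesis .
qed

lemma fitness_mutant:
  assumes i: "i \<in> players"
  shows "fitness pd p \<mu>' b' s' i mutant = 1 + e * p"
proof -
  have o: "other i \<in> players"
    using other_in_players[OF i] .
  have "(\<Sum>u\<in>supp (\<mu> (other i)). \<mu> (other i) u * (if pr i mutant u = (mutant, mutant) then 1 + p else 1))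
      = (\<Sum>u\<in>supp (\<mu> (other i)). \<mu> (other i) u * 1)"
    using fresh[OF o] by (intro sum.cong) (auto simp: pr_eq_diag)
  also have "\<dots> = 1"
    by (rule fdist_expect_const[OF fdist[OF o]])
  finally show ?thesis
    unfolding fitness_def payoff_post[OF i] expect_post[OF o] by (simp add: pr_def algebra_simps)
qed

lemma not_entry_contained: "\<not> entry_contained pd p \<mu> players (\<lambda>_. mutant) \<mu>' b' s'"
proof -
  have one: "(1::nat) \<in> players"
    by (simp add: players_def)
  have gain: "fitness pd p \<mu>' b' s' i t < fitness pd p \<mu>' b' s' i mutant"
    if "i \<in> players" "t \<in> supp (\<mu> i)" for i t
    using fitness_incumbent[OF that] fitness_mutant[OF that(1)] e(1) p by simp
  obtain t where t: "t \<in> supp (\<mu> 1)"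
    using fdist_supp_nonempty[OF fdist[OF one]] by blast
  have "t \<in> supp (\<mu>' 1)" "mutant \<in> supp (\<mu>' 1)"
    using supp_post[OF one] t by auto
  then show ?thesis
    unfolding entry_contained_def
  proof (intro notI, elim disjE)
    assume "\<exists>j\<in>players. \<forall>t\<in>supp (\<mu> j). fitness pd p \<mu>' b' s' j t > fitness pd p \<mu>' b' s' j mutant"
    then obtain j where j: "j \<in> players" and worse: "\<forall>t\<in>supp (\<mu> j). fitness pd p \<mu>' b' s' j t > fitness pd p \<mu>' b' s' j mutant"
      by blast
    obtain t where "t \<in> supp (\<mu> j)"
      using fdist_supp_nonempty[OF fdist[OF j]] by blast
    with worse gain[OF j] show False
      by fastforce
  next
    assume "\<forall>i\<in>players. \<forall>t\<in>supp (\<mu>' i). \<forall>t'\<in>supp (\<mu>' i). fitness pd p \<mu>' b' s' i t = fitness pd p \<mu>' b' s' i t'"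
    with one \<open>t \<in> supp (\<mu>' 1)\<close> \<open>mutant \<in> supp (\<mu>' 1)\<close>
    have "fitness pd p \<mu>' b' s' 1 t = fitness pd p \<mu>' b' s' 1 mutant"
      by blast
    with gain[OF one t] show False
      by simp
  qed
qed

end

theorem mainTheorem19:
  fixes p :: real
  assumes "0 < p" and "p < 1"
  shows "\<not> stable_profile pd p (D, D)"
proof
  assume "stable_profile pd p (D, D)"
  then obtain \<mu> b s where fd: "fdist (\<mu> 1)" "fdist (\<mu> 2)" and eq: "is_eq p \<mu> b s"
    and st: "stable pd p \<mu> b s" and out: "\<forall>a. outcome p \<mu> b s a = (if a = (D, D) then 1 else 0)"
    unfolding stable_profile_def by blast
  have fdist: "fdist (\<mu> i)" if "i \<in> players" for i
    using fd that by (auto simp: players_def)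
  note all_D = point_mass_DD_imp_all_D[OF assms fd eq out]
  have D_best_reply: "t (pr i C D) \<le> t (pr i D D)" if "i \<in> players" "t \<in> supp (\<mu> i)" for i t
    using all_D_imp_D_best_reply[OF eq all_D that] fdist_supp_nonempty[OF fdist[OF other_in_players[OF that(1)]]]
    by blast
  have "finite (supp (\<mu> 1) \<union> supp (\<mu> 2))"
    using fd by (simp add: fdist_def)
  then obtain K where K: "(1 - p) / p \<le> K" and fresh: "handshake K \<notin> supp (\<mu> 1) \<union> supp (\<mu> 2)"
    by (rule ex_fresh_handshake)
  have fresh: "handshake K \<notin> supp (\<mu> i)" if "i \<in> players" for i
    using fresh that by (auto simp: players_def)
  obtain \<epsilon> where \<epsilon>: "0 < \<epsilon>" "\<epsilon> \<le> 1" and contained: "\<And>e b' s'. 0 < e \<Longrightarrow> e < \<epsilon>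
      \<Longrightarrow> nearby p (postentry \<mu> players (\<lambda>_. handshake K) (\<lambda>_. e)) \<mu> b s 0 b' s'
      \<Longrightarrow> entry_contained pd p \<mu> players (\<lambda>_. handshake K) (postentry \<mu> players (\<lambda>_. handshake K) (\<lambda>_. e)) b' s'"
    using stable_imp_entry_contained[OF st fresh] by blast
  have pK: "1 - p \<le> p * K"
    using K assms by (simp add: field_simps)
  obtain e where e_small: "0 < e" "e < \<epsilon>" "e < 1 / (p * K + p)"
    using field_lbound_gt_zero[OF \<epsilon>(1), of "1 / (p * K + p)"] pK by auto
  interpret handshake_invasion p \<mu> K e
    using assms fdist fresh D_best_reply pK e_small \<epsilon>(2) by unfold_locales (auto simp: field_simps)
  show False
    using contained[OF e_small(1,2) nearby_post[OF all_D]] not_entry_contained by blast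
qed

end
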